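(* Let $\xi$ be a DoS sequence that is not an edge case, and let $\hat{B}_d(t)$ and $\hat{B}_f(t)$ be generated by the DoS estimator with parameters $2\leqslant \ell\in\mathbb{N}_+$, $0<\epsilon_0<1$, $0<\theta<1$. Then there exists a finite $T\geqslant 0$ such that $\hat{B}_d(t)\in\mathcal{D}(\xi)$ and $\hat{B}_f(t)\in\mathcal{F}(\xi)$ for all $t\geqslant T$.
   Context: A DoS sequence $\xi=\{H_n\}$ is a finite or infinite sequence of sets $H_n := \{h_n\}\cup[h_n,h_n+\tau_n)$, where $h_1\geqslant 0$, $\tau_n\geqslant 0$ and $h_{n+1} > h_n+\tau_n$ for all $n$. If $\xi$ has only $m$ elements, the convention $h_{n}=h_{n}+\tau_{n}=+\infty$ for $n>m$ is used. For $0\leqslant \tau\leqslant s$ let $\Xi(\tau,s) := \bigcup_n H_n\cap[\tau,s]$ and $n_\xi(\tau,s) := \operatorname{card}(\{h_n\}_n\cap[\tau,s])$; $\lvert\cdot\rvert$ denotes Lebesgue measure. A constant $B_d\in[0,1]$ is a duration-bound of $\xi$ if there is a constant $0<\kappa<+\infty$ with $\lvert \Xi(0,t)\rvert\leqslant \kappa + B_d t$ for all $t\geqslant 0$. A constant $B_f\in[0,+\infty)$ is a frequency-bound of $\xi$ if there is an integer $0<\Lambda<+\infty$ with $n_\xi(0,t)\leqslant \Lambda + B_f t$ for all $t\geqslant 0$; if no such finite $B_f$ exists, the frequency-bound is defined to be $+\infty$. $\mathcal{D}(\xi)$ and $\mathcal{F}(\xi)$ denote the sets of all duration-bounds and frequency-bounds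 of $\xi$. $\xi$ is an edge case if (i) $\inf\mathcal{D}(\xi)=1$, or (ii) $\inf\mathcal{F}(\xi)=+\infty$, or (iii) for every $\Gamma\in(0,+\infty)$ there is $n$ with $\tau_n>\Gamma$. DoS estimator: with $B_d(i) := \frac{\lvert \Xi(0,h_i+\tau_i)\rvert}{h_i+\tau_i}$ and $B_f(i) := \frac{i}{h_i}$, $\hat B_d(t) = \epsilon_0$ for $t\in[0,h_\ell+\tau_\ell)$ and $\hat B_d(t) = \max_{\ell\leqslant i\leqslant n}\{\epsilon_0,\ \theta B_d(i)+(1-\theta)\}$ for $t\in[h_n+\tau_n, h_{n+1}+\tau_{n+1})$, $n\geqslant \ell$; $\hat B_f(t) = \epsilon_0$ for $t\in[0,h_\ell)$ and $\hat B_f(t) = \max_{\ell\leqslant i\leqslant n}\{\epsilon_0,\ B_f(i)/\theta\}$ for $t\in[h_n,h_{n+1})$, $n\geqslant\ell$. *)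

theory Defs
  imports "HOL-Analysis.Analysis" "HOL-Library.Extended_Nat"
begin

text \<open>A DoS sequence is given by h, tau :: nat => real (indices start at 1)
  and a length N :: enat (N = infinity for an infinite sequence).
  Index n is valid iff 1 <= n <= N.\<close>

definition valid_idx :: "enat \<Rightarrow> nat \<Rightarrow> bool" where
  "valid_idx N n \<longleftrightarrow> 1 \<le> n \<and> enat n \<le> N"

definition dos_seq :: "(nat \<Rightarrow> real) \<Rightarrow> (nat \<Rightarrow> real) \<Rightarrow> enat \<Rightarrow> bool" where
  "dos_seq h \<tau> N \<longleftrightarrow>
     (valid_idx N 1 \<longrightarrow> 0 \<le> h 1) \<and>
     (\<forall>n. valid_idx N n \<longrightarrow> 0 \<le> \<tau> n) \<and>
     (\<forall>n. valid_idx N n \<and> valid_idx N (Suc n) \<longrightarrow> h (Suc n) > h n + \<tau> n)"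

definition Xi :: "(nat \<Rightarrow> real) \<Rightarrow> (nat \<Rightarrow> real) \<Rightarrow> enat \<Rightarrow> real \<Rightarrow> real \<Rightarrow> real set" where
  "Xi h \<tau> N a b = (\<Union>n\<in>{n. valid_idx N n}. insert (h n) {h n..<h n + \<tau> n}) \<inter> {a..b}"

definition n_xi :: "(nat \<Rightarrow> real) \<Rightarrow> enat \<Rightarrow> real \<Rightarrow> real \<Rightarrow> ereal" where
  "n_xi h N a b = (let S = (h ` {n. valid_idx N n}) \<inter> {a..b} in
                    if finite S then ereal (real (card S)) else \<infinity>)"

definition dur_bounds :: "(nat \<Rightarrow> real) \<Rightarrow> (nat \<Rightarrow> real) \<Rightarrow> enat \<Rightarrow> real set" where
  "dur_bounds h \<tau> N = {Bd. 0 \<le> Bd \<and> Bd \<le> 1 \<and>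
     (\<exists>\<kappa>::real. 0 < \<kappa> \<and> (\<forall>t\<ge>0. measure lborel (Xi h \<tau> N 0 t) \<le> \<kappa> + Bd * t))}"

text \<open>Finite frequency bounds; the paper's convention "frequency-bound = +infinity"
  corresponds to this set being empty (its ereal infimum is then infinity).\<close>
definition freq_bounds :: "(nat \<Rightarrow> real) \<Rightarrow> enat \<Rightarrow> real set" where
  "freq_bounds h N = {Bf. 0 \<le> Bf \<and>
     (\<exists>\<Lambda>::nat. 0 < \<Lambda> \<and> (\<forall>t\<ge>0. n_xi h N 0 t \<le> ereal (real \<Lambda> + Bf * t)))}"

definition edge_case :: "(nat \<Rightarrow> real) \<Rightarrow> (nat \<Rightarrow> real) \<Rightarrow> enat \<Rightarrow> bool" where
  "edge_case h \<tau> N \<longleftrightarrow>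
     Inf (dur_bounds h \<tau> N) = 1 \<or>
     Inf (ereal ` freq_bounds h N) = \<infinity> \<or>
     (\<forall>\<Gamma>::real. 0 < \<Gamma> \<longrightarrow> (\<exists>n. valid_idx N n \<and> \<tau> n > \<Gamma>))"

definition ext_h :: "(nat \<Rightarrow> real) \<Rightarrow> enat \<Rightarrow> nat \<Rightarrow> ereal" where
  "ext_h h N n = (if valid_idx N n then ereal (h n) else \<infinity>)"

definition ext_end :: "(nat \<Rightarrow> real) \<Rightarrow> (nat \<Rightarrow> real) \<Rightarrow> enat \<Rightarrow> nat \<Rightarrow> ereal" where
  "ext_end h \<tau> N n = (if valid_idx N n then ereal (h n + \<tau> n) else \<infinity>)"

definition Bd_i :: "(nat \<Rightarrow> real) \<Rightarrow> (nat \<Rightarrow> real) \<Rightarrow> enat \<Rightarrow> nat \<Rightarrow> real" where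
  "Bd_i h \<tau> N i = measure lborel (Xi h \<tau> N 0 (h i + \<tau> i)) / (h i + \<tau> i)"

definition Bf_i :: "(nat \<Rightarrow> real) \<Rightarrow> nat \<Rightarrow> real" where
  "Bf_i h i = real i / h i"

definition Bd_hat :: "(nat \<Rightarrow> real) \<Rightarrow> (nat \<Rightarrow> real) \<Rightarrow> enat \<Rightarrow> nat \<Rightarrow> real \<Rightarrow> real \<Rightarrow> real \<Rightarrow> real" where
  "Bd_hat h \<tau> N l \<epsilon>0 \<theta> t =
     (if ereal t < ext_end h \<tau> N l then \<epsilon>0
      else (let n = (THE n. l \<le> n \<and> ext_end h \<tau> N n \<le> ereal t \<and> ereal t < ext_end h \<tau> N (Suc n))
            in Max ({\<epsilon>0} \<union> (\<lambda>i. \<theta> * Bd_i h \<tau> N i + (1 - \<theta>)) ` {l..n})))"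

definition Bf_hat :: "(nat \<Rightarrow> real) \<Rightarrow> enat \<Rightarrow> nat \<Rightarrow> real \<Rightarrow> real \<Rightarrow> real \<Rightarrow> real" where
  "Bf_hat h N l \<epsilon>0 \<theta> t =
     (if ereal t < ext_h h N l then \<epsilon>0
      else (let n = (THE n. l \<le> n \<and> ext_h h N n \<le> ereal t \<and> ereal t < ext_h h N (Suc n))
            in Max ({\<epsilon>0} \<union> (\<lambda>i. Bf_i h i / \<theta>) ` {l..n})))"

end

(*
  Outside the edge cases, Inf D < 1, some finite frequency-bound exists (so only finitely many
  attacks start before any time t), and all durations are bounded by some \<Gamma>.  Both bound sets
  are upward closed and both estimators are running maxima that never drop below \<epsilon>0, so it
  suffices that each estimate eventually reaches a member of its set.

  Suppose no term \<theta> B_d(i) + (1 - \<theta>) with i \<ge> l exceeds Inf D.  Then every B_d(i) is at most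
  b = (Inf D - 1 + \<theta>) / \<theta> < Inf D, and b is a duration-bound: if k is the last attack started
  by t, then |\<Xi>(0,t)| \<le> |\<Xi>(0,h_k+\<tau>_k)| = B_d(k) (h_k+\<tau>_k) \<le> b (t + \<Gamma>).  As b < Inf D, this
  forces max b \<epsilon>0 = \<epsilon>0 \<in> D.  In the same way, if no B_f(i)/\<theta> exceeds Inf F, then
  i \<le> \<theta> Inf F h_i for all i \<ge> l, so max (\<theta> Inf F) \<epsilon>0 is a frequency-bound, which forces \<epsilon>0 \<in> F.
*)

theory Submission
  imports Defs
begin

definition attacks_until :: "(nat \<Rightarrow> real) \<Rightarrow> enat \<Rightarrow> real \<Rightarrow> nat set" where
  "attacks_until h N t = {n. valid_idx N n \<and> h n \<le> t}"

lemma valid_idx_downward: "valid_idx N j \<Longrightarrow> 1 \<le> i \<Longrightarrow> i \<le> j \<Longrightarrow> valid_idx N i"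
  unfolding valid_idx_def using order_trans[of "enat i" "enat j" N] by auto

lemma dos_seq_tau_nonneg: "dos_seq h \<tau> N \<Longrightarrow> valid_idx N n \<Longrightarrow> 0 \<le> \<tau> n"
  unfolding dos_seq_def by auto

lemma dos_seq_end_less_start:
  assumes d: "dos_seq h \<tau> N" and "valid_idx N j" and i: "1 \<le> i" and "i < j"
  shows "h i + \<tau> i < h j"
  using \<open>valid_idx N j\<close> \<open>i < j\<close>
proof (induction j)
  case 0
  then show ?case by simp
next
  case (Suc m)
  have vm: "valid_idx N m" using valid_idx_downward[OF Suc.prems(1)] i Suc.prems(2) by simp
  have step: "h m + \<tau> m < h (Suc m)" using d vm Suc.prems(1) unfolding dos_seq_def by blast
  show ?case
  proof (cases "i = m")
    case False
    then have "h i + \<tau> i < h m" using Suc.IH vm Suc.prems(2) by simp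
    then show ?thesis using step dos_seq_tau_nonneg[OF d vm] by linarith
  qed (use step in simp)
qed

lemma dos_seq_first_end_less:
  assumes d: "dos_seq h \<tau> N" and "valid_idx N n" "2 \<le> n"
  shows "0 \<le> h 1 + \<tau> 1" and "h 1 + \<tau> 1 < h n"
proof -
  have "valid_idx N 1" using valid_idx_downward[OF \<open>valid_idx N n\<close>] \<open>2 \<le> n\<close> by simp
  then show "0 \<le> h 1 + \<tau> 1" using d unfolding dos_seq_def by auto
  show "h 1 + \<tau> 1 < h n" using dos_seq_end_less_start[OF d \<open>valid_idx N n\<close>] \<open>2 \<le> n\<close> by simp
qed

lemma dos_seq_start_pos:
  assumes "dos_seq h \<tau> N" "valid_idx N n" "2 \<le> n"
  shows "0 < h n"
  using dos_seq_first_end_less[OF assms] by linarith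

lemma dos_seq_start_nonneg:
  assumes d: "dos_seq h \<tau> N" and v: "valid_idx N n"
  shows "0 \<le> h n"
proof (cases "n = 1")
  case True
  then show ?thesis using d v unfolding dos_seq_def by auto
next
  case False
  then have "2 \<le> n" using v by (simp add: valid_idx_def)
  then show ?thesis using dos_seq_start_pos[OF d v] by simp
qed

lemma dos_seq_strict_mono_end:
  assumes d: "dos_seq h \<tau> N"
  shows "strict_mono_on {n. valid_idx N n} (\<lambda>n. h n + \<tau> n)"
proof (rule strict_mono_onI)
  fix i j assume "i \<in> {n. valid_idx N n}" "j \<in> {n. valid_idx N n}" "i < j"
  then have "h i + \<tau> i < h j" "0 \<le> \<tau> j"
    using dos_seq_end_less_start[OF d] dos_seq_tau_nonneg[OF d] by (auto simp: valid_idx_def)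
  then show "h i + \<tau> i < h j + \<tau> j" by linarith
qed

lemma dos_seq_strict_mono_start:
  assumes d: "dos_seq h \<tau> N"
  shows "strict_mono_on {n. valid_idx N n} h"
proof (rule strict_mono_onI)
  fix i j assume "i \<in> {n. valid_idx N n}" "j \<in> {n. valid_idx N n}" "i < j"
  then have "h i + \<tau> i < h j" "0 \<le> \<tau> i"
    using dos_seq_end_less_start[OF d] dos_seq_tau_nonneg[OF d] by (auto simp: valid_idx_def)
  then show "h i < h j" by linarith
qed

lemma Xi_subset_Icc: "Xi h \<tau> N a b \<subseteq> {a..b}"
  unfolding Xi_def by auto

lemma sets_Xi: "Xi h \<tau> N a b \<in> sets lborel"
proof -
  have "insert (h n) {h n..<h n + \<tau> n} \<in> sets lborel" for n
    by (rule sets.insert_in_sets) (simp_all add: atLeastLessThan_borel)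
  then have "(\<Union>n\<in>{n. valid_idx N n}. insert (h n) {h n..<h n + \<tau> n}) \<in> sets lborel"
    by (intro sets.countable_UN') auto
  then show ?thesis unfolding Xi_def by (intro sets.Int) auto
qed

lemma fmeasurable_Xi: "Xi h \<tau> N a b \<in> fmeasurable lborel"
  by (rule fmeasurableI2[OF fmeasurable_compact[OF compact_Icc] Xi_subset_Icc sets_Xi])

lemma measure_Xi_le:
  assumes "a \<le> b"
  shows "measure lborel (Xi h \<tau> N a b) \<le> b - a"
proof -
  have "measure lborel (Xi h \<tau> N a b) \<le> measure lborel {a..b}"
    by (rule measure_mono_fmeasurable[OF Xi_subset_Icc sets_Xi fmeasurable_compact[OF compact_Icc]])
  then show ?thesis using assms by simp
qed

lemma Bd_i_le_one: "Bd_i h \<tau> N i \<le> 1"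
proof (cases "0 < h i + \<tau> i")
  case True
  then show ?thesis
    using measure_Xi_le[of 0 "h i + \<tau> i" h \<tau> N] by (simp add: Bd_i_def pos_divide_le_eq)
next
  case False
  then show ?thesis
    using divide_nonneg_nonpos[of "measure lborel (Xi h \<tau> N 0 (h i + \<tau> i))" "h i + \<tau> i"]
    by (simp add: Bd_i_def)
qed

lemma measure_Xi_eq_Bd_i_mult:
  "measure lborel (Xi h \<tau> N 0 (h k + \<tau> k)) = Bd_i h \<tau> N k * (h k + \<tau> k)"
proof (cases "h k + \<tau> k = 0")
  case True
  then show ?thesis using measure_Xi_le[of 0 0 h \<tau> N] by (simp add: measure_le_0_iff)
qed (simp add: Bd_i_def)

lemma mem_XiE:
  assumes "dos_seq h \<tau> N" and "x \<in> Xi h \<tau> N a b"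
  obtains n where "valid_idx N n" "h n \<le> x" "x \<le> h n + \<tau> n" "a \<le> x" "x \<le> b"
  using assms dos_seq_tau_nonneg unfolding Xi_def by fastforce

lemma Xi_eq_empty: "attacks_until h N t = {} \<Longrightarrow> Xi h \<tau> N a t = {}"
  unfolding Xi_def attacks_until_def by force

lemma Xi_subset_Xi_last_end:
  assumes d: "dos_seq h \<tau> N" and fin: "finite (attacks_until h N t)"
    and ne: "attacks_until h N t \<noteq> {}"
  defines "k \<equiv> Max (attacks_until h N t)"
  shows "Xi h \<tau> N 0 t \<subseteq> Xi h \<tau> N 0 (h k + \<tau> k)"
proof
  fix x assume x: "x \<in> Xi h \<tau> N 0 t"
  then obtain n where n: "valid_idx N n" "h n \<le> x" "x \<le> h n + \<tau> n" "x \<le> t"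
    using d by (auto elim: mem_XiE)
  have "n \<in> attacks_until h N t" using n unfolding attacks_until_def by simp
  then have "n \<le> k" unfolding k_def using fin by simp
  moreover have "valid_idx N k" using Max_in[OF fin ne] unfolding k_def attacks_until_def by simp
  ultimately have "h n + \<tau> n \<le> h k + \<tau> k"
    using strict_mono_on_leD[OF dos_seq_strict_mono_end[OF d]] n(1) by simp
  then show "x \<in> Xi h \<tau> N 0 (h k + \<tau> k)" using x n(3) unfolding Xi_def by auto
qed

lemma n_xi_eq_card_attacks_until:
  assumes d: "dos_seq h \<tau> N"
  shows "n_xi h N 0 t = (if finite (attacks_until h N t)
                         then ereal (real (card (attacks_until h N t))) else \<infinity>)"
proof -
  have img: "h ` {n. valid_idx N n} \<inter> {0..t} = h ` attacks_until h N t"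
    using dos_seq_start_nonneg[OF d] unfolding attacks_until_def by auto
  have inj: "inj_on h (attacks_until h N t)"
    using strict_mono_on_imp_inj_on[OF dos_seq_strict_mono_start[OF d]]
    by (rule inj_on_subset) (auto simp: attacks_until_def)
  show ?thesis unfolding n_xi_def Let_def img using finite_image_iff[OF inj] card_image[OF inj] by simp
qed

lemma finite_attacks_until:
  assumes d: "dos_seq h \<tau> N" and "freq_bounds h N \<noteq> {}"
  shows "finite (attacks_until h N t)"
proof -
  obtain B \<Lambda> where "\<forall>s\<ge>0. n_xi h N 0 s \<le> ereal (real \<Lambda> + B * s)"
    using assms(2) unfolding freq_bounds_def by blast
  then have "n_xi h N 0 (max 0 t) \<le> ereal (real \<Lambda> + B * max 0 t)" by simp
  then have "n_xi h N 0 (max 0 t) \<noteq> \<infinity>" by auto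
  then have "finite (attacks_until h N (max 0 t))"
    by (simp add: n_xi_eq_card_attacks_until[OF d] split: if_splits)
  moreover have "attacks_until h N t \<subseteq> attacks_until h N (max 0 t)"
    unfolding attacks_until_def by auto
  ultimately show ?thesis by (rule finite_subset[rotated])
qed

lemma one_mem_dur_bounds: "1 \<in> dur_bounds h \<tau> N"
proof -
  have "measure lborel (Xi h \<tau> N 0 t) \<le> 1 + 1 * t" if "0 \<le> t" for t
    using measure_Xi_le[OF that, of h \<tau> N] by simp
  then show ?thesis unfolding dur_bounds_def by (intro CollectI conjI exI[of _ 1]) auto
qed

lemma bdd_below_dur_bounds: "bdd_below (dur_bounds h \<tau> N)"
  unfolding dur_bounds_def by (rule bdd_belowI[of _ 0]) auto

lemma bdd_below_freq_bounds: "bdd_below (freq_bounds h N)"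
  unfolding freq_bounds_def by (rule bdd_belowI[of _ 0]) auto

lemma Inf_dur_bounds_le_one: "Inf (dur_bounds h \<tau> N) \<le> 1"
  by (rule cInf_lower[OF one_mem_dur_bounds bdd_below_dur_bounds])

lemma dur_bounds_upward_closed:
  assumes "y \<in> dur_bounds h \<tau> N" "y \<le> x" "x \<le> 1"
  shows "x \<in> dur_bounds h \<tau> N"
proof -
  obtain \<kappa> where "0 \<le> y" "0 < \<kappa>" and bound: "\<forall>t\<ge>0. measure lborel (Xi h \<tau> N 0 t) \<le> \<kappa> + y * t"
    using assms(1) unfolding dur_bounds_def by blast
  have "\<forall>t\<ge>0. measure lborel (Xi h \<tau> N 0 t) \<le> \<kappa> + x * t"
  proof (intro allI impI)
    fix t :: real assume "0 \<le> t"
    then have "measure lborel (Xi h \<tau> N 0 t) \<le> \<kappa> + y * t" using bound by blast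
    also have "\<dots> \<le> \<kappa> + x * t" using \<open>0 \<le> t\<close> assms(2) by (simp add: mult_right_mono)
    finally show "measure lborel (Xi h \<tau> N 0 t) \<le> \<kappa> + x * t" .
  qed
  moreover have "0 \<le> x" using \<open>0 \<le> y\<close> assms(2) by linarith
  ultimately show ?thesis unfolding dur_bounds_def using \<open>0 < \<kappa>\<close> assms(3) by blast
qed

lemma freq_bounds_upward_closed:
  assumes "y \<in> freq_bounds h N" "y \<le> x"
  shows "x \<in> freq_bounds h N"
proof -
  obtain \<Lambda> :: nat where "0 \<le> y" "0 < \<Lambda>" and bound: "\<forall>t\<ge>0. n_xi h N 0 t \<le> ereal (real \<Lambda> + y * t)"
    using assms(1) unfolding freq_bounds_def by blast
  have "\<forall>t\<ge>0. n_xi h N 0 t \<le> ereal (real \<Lambda> + x * t)"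
  proof (intro allI impI)
    fix t :: real assume "0 \<le> t"
    then have "n_xi h N 0 t \<le> ereal (real \<Lambda> + y * t)" using bound by blast
    also have "\<dots> \<le> ereal (real \<Lambda> + x * t)" using \<open>0 \<le> t\<close> assms(2) by (simp add: mult_right_mono)
    finally show "n_xi h N 0 t \<le> ereal (real \<Lambda> + x * t)" .
  qed
  moreover have "0 \<le> x" using \<open>0 \<le> y\<close> assms(2) by linarith
  ultimately show ?thesis unfolding freq_bounds_def using \<open>0 < \<Lambda>\<close> by blast
qed

lemma dur_bound_of_Bd_i_bound:
  assumes d: "dos_seq h \<tau> N"
    and \<Gamma>: "0 \<le> \<Gamma>" "\<And>n. valid_idx N n \<Longrightarrow> \<tau> n \<le> \<Gamma>"
    and fin: "\<And>t. finite (attacks_until h N t)"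
    and b: "0 \<le> b" "b \<le> 1"
    and Bd: "\<And>i. valid_idx N i \<Longrightarrow> l \<le> i \<Longrightarrow> Bd_i h \<tau> N i \<le> b"
  shows "b \<in> dur_bounds h \<tau> N"
proof -
  define C where "C = Max (insert 0 ((\<lambda>n. h n + \<tau> n) ` {..<l}))"
  have C0: "0 \<le> C" unfolding C_def by simp
  have "measure lborel (Xi h \<tau> N 0 t) \<le> (C + b * \<Gamma> + 1) + b * t" if t: "0 \<le> t" for t
  proof (cases "attacks_until h N t = {}")
    case True
    then show ?thesis using Xi_eq_empty C0 \<Gamma>(1) b t by simp
  next
    case False
    define k where "k = Max (attacks_until h N t)"
    have "k \<in> attacks_until h N t" unfolding k_def using fin False by (rule Max_in)
    then have k: "valid_idx N k" "h k \<le> t" unfolding attacks_until_def by auto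
    have ek: "0 \<le> h k + \<tau> k" using dos_seq_start_nonneg[OF d k(1)] dos_seq_tau_nonneg[OF d k(1)] by simp
    have "measure lborel (Xi h \<tau> N 0 t) \<le> measure lborel (Xi h \<tau> N 0 (h k + \<tau> k))"
      using Xi_subset_Xi_last_end[OF d fin False] unfolding k_def[symmetric]
      by (rule measure_mono_fmeasurable[OF _ sets_Xi fmeasurable_Xi])
    also have "\<dots> = Bd_i h \<tau> N k * (h k + \<tau> k)" by (rule measure_Xi_eq_Bd_i_mult)
    also have "\<dots> \<le> C + b * \<Gamma> + b * t"
    proof (cases "l \<le> k")
      case True
      have "Bd_i h \<tau> N k * (h k + \<tau> k) \<le> b * (h k + \<tau> k)"
        using Bd[OF k(1) True] ek by (rule mult_right_mono)
      also have "\<dots> \<le> b * (t + \<Gamma>)" using k \<Gamma>(2)[OF k(1)] b(1) by (intro mult_left_mono) auto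
      finally show ?thesis using C0 by (simp add: distrib_left)
    next
      case False
      have "Bd_i h \<tau> N k * (h k + \<tau> k) \<le> h k + \<tau> k"
        using mult_right_mono[OF Bd_i_le_one ek] by simp
      also have "\<dots> \<le> C" unfolding C_def using False by (intro Max_ge) auto
      moreover have "0 \<le> b * \<Gamma>" "0 \<le> b * t" using b(1) \<Gamma>(1) t by simp_all
      ultimately show ?thesis by linarith
    qed
    finally show ?thesis by simp
  qed
  moreover have "0 < C + b * \<Gamma> + 1"
    using C0 mult_nonneg_nonneg[OF b(1) \<Gamma>(1)] by linarith
  ultimately show ?thesis unfolding dur_bounds_def using b by blast
qed

lemma freq_bound_of_start_lower_bound:
  assumes d: "dos_seq h \<tau> N" and fin: "\<And>t. finite (attacks_until h N t)"
    and c: "0 < c" and bound: "\<And>j. valid_idx N j \<Longrightarrow> l \<le> j \<Longrightarrow> real j \<le> c * h j"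
  shows "c \<in> freq_bounds h N"
proof -
  have card_bound: "real (card (attacks_until h N t)) \<le> real (Suc l) + c * t" if t: "0 \<le> t" for t
  proof (cases "attacks_until h N t = {}")
    case True
    then show ?thesis using c t by simp
  next
    case False
    define k where "k = Max (attacks_until h N t)"
    have "k \<in> attacks_until h N t" unfolding k_def using fin False by (rule Max_in)
    then have k: "valid_idx N k" "h k \<le> t" unfolding attacks_until_def by auto
    have "card (attacks_until h N t) \<le> Suc k" unfolding k_def using fin by (rule card_le_Suc_Max)
    moreover have "real k \<le> real l + c * t"
    proof (cases "l \<le> k")
      case True
      have "real k \<le> c * h k" using bound[OF k(1) True] .
      also have "\<dots> \<le> c * t" using k(2) c by simp
      finally show ?thesis by simp
    next
      case False
      moreover have "0 \<le> c * t" using c t by simp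
      ultimately show ?thesis by simp
    qed
    ultimately show ?thesis by linarith
  qed
  show ?thesis unfolding freq_bounds_def
  proof (intro CollectI conjI exI[of _ "Suc l"] allI impI)
    fix t :: real assume "0 \<le> t"
    have "n_xi h N 0 t = ereal (real (card (attacks_until h N t)))"
      using fin[of t] by (simp add: n_xi_eq_card_attacks_until[OF d])
    then show "n_xi h N 0 t \<le> ereal (real (Suc l) + c * t)"
      using card_bound[OF \<open>0 \<le> t\<close>] by simp
  qed (use c in auto)
qed

lemma THE_current_index_eq_Max:
  fixes g :: "nat \<Rightarrow> real"
  assumes mono: "strict_mono_on {n. valid_idx N n} g"
    and fin: "finite {n. valid_idx N n \<and> g n \<le> t}"
    and i: "valid_idx N i" "l \<le> i" "g i \<le> t"
    and E: "\<And>n. E n = (if valid_idx N n then ereal (g n) else \<infinity>)"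
  shows "(THE n. l \<le> n \<and> E n \<le> ereal t \<and> ereal t < E (Suc n)) = Max {n. valid_idx N n \<and> g n \<le> t}"
proof -
  let ?S = "{n. valid_idx N n \<and> g n \<le> t}"
  have iS: "i \<in> ?S" using i by simp
  then have ik: "i \<le> Max ?S" using fin by simp
  have "Max ?S \<in> ?S" using fin iS by (intro Max_in) auto
  then have k: "valid_idx N (Max ?S)" "g (Max ?S) \<le> t" by auto
  show ?thesis
  proof (rule the_equality)
    have "Suc (Max ?S) \<notin> ?S" using fin by (auto dest: Max_ge)
    then show "l \<le> Max ?S \<and> E (Max ?S) \<le> ereal t \<and> ereal t < E (Suc (Max ?S))"
      using i(2) ik k E by auto
  next
    fix n assume n: "l \<le> n \<and> E n \<le> ereal t \<and> ereal t < E (Suc n)"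
    then have "n \<in> ?S" using E by (auto split: if_splits)
    then have "n \<le> Max ?S" using fin by simp
    moreover have "\<not> n < Max ?S"
    proof
      assume "n < Max ?S"
      then have "valid_idx N (Suc n)" using valid_idx_downward[OF k(1)] by simp
      moreover have "g (Suc n) \<le> g (Max ?S)"
        using strict_mono_on_leD[OF mono] \<open>n < Max ?S\<close> k(1) \<open>valid_idx N (Suc n)\<close> by simp
      ultimately show False using n k(2) E by auto
    qed
    ultimately show "n = Max ?S" by simp
  qed
qed

lemma Bd_hat_ge_eps: "\<epsilon>0 \<le> Bd_hat h \<tau> N l \<epsilon>0 \<theta> t"
  unfolding Bd_hat_def Let_def by (auto intro: Max_ge)

lemma Bf_hat_ge_eps: "\<epsilon>0 \<le> Bf_hat h N l \<epsilon>0 \<theta> t"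
  unfolding Bf_hat_def Let_def by (auto intro: Max_ge)

lemma Bd_hat_le_one:
  assumes "\<epsilon>0 \<le> 1" "0 \<le> \<theta>"
  shows "Bd_hat h \<tau> N l \<epsilon>0 \<theta> t \<le> 1"
proof -
  have "\<theta> * Bd_i h \<tau> N i + (1 - \<theta>) \<le> 1" for i
    using mult_left_mono[OF Bd_i_le_one assms(2)] by simp
  then show ?thesis unfolding Bd_hat_def Let_def using assms(1) by auto
qed

lemma Bd_hat_ge_Bd_i:
  assumes d: "dos_seq h \<tau> N" and fin: "finite (attacks_until h N t)" and "1 \<le> l"
    and i: "valid_idx N i" "l \<le> i" "h i + \<tau> i \<le> t"
  shows "\<theta> * Bd_i h \<tau> N i + (1 - \<theta>) \<le> Bd_hat h \<tau> N l \<epsilon>0 \<theta> t"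
proof -
  let ?S = "{n. valid_idx N n \<and> h n + \<tau> n \<le> t}"
  have "?S \<subseteq> attacks_until h N t"
    unfolding attacks_until_def using dos_seq_tau_nonneg[OF d] by force
  then have finS: "finite ?S" using fin by (rule finite_subset)
  have "valid_idx N l" using valid_idx_downward[OF i(1) \<open>1 \<le> l\<close> i(2)] .
  moreover have "h l + \<tau> l \<le> h i + \<tau> i"
    using strict_mono_on_leD[OF dos_seq_strict_mono_end[OF d]] \<open>valid_idx N l\<close> i by simp
  ultimately have started: "\<not> ereal t < ext_end h \<tau> N l" using i(3) by (simp add: ext_end_def)
  have "i \<le> Max ?S" using finS i by simp
  then have "\<theta> * Bd_i h \<tau> N i + (1 - \<theta>)
      \<le> Max ({\<epsilon>0} \<union> (\<lambda>i. \<theta> * Bd_i h \<tau> N i + (1 - \<theta>)) ` {l..Max ?S})"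
    using i(2) by (intro Max_ge) auto
  also have "\<dots> = Bd_hat h \<tau> N l \<epsilon>0 \<theta> t"
    unfolding Bd_hat_def Let_def if_not_P[OF started]
      THE_current_index_eq_Max[OF dos_seq_strict_mono_end[OF d] finS i ext_end_def[of h \<tau> N]] ..
  finally show ?thesis .
qed

lemma Bf_hat_ge_Bf_i:
  assumes d: "dos_seq h \<tau> N" and fin: "finite (attacks_until h N t)" and "1 \<le> l"
    and i: "valid_idx N i" "l \<le> i" "h i \<le> t"
  shows "Bf_i h i / \<theta> \<le> Bf_hat h N l \<epsilon>0 \<theta> t"
proof -
  have finS: "finite {n. valid_idx N n \<and> h n \<le> t}" using fin unfolding attacks_until_def .
  have "valid_idx N l" using valid_idx_downward[OF i(1) \<open>1 \<le> l\<close> i(2)] .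
  moreover have "h l \<le> h i"
    using strict_mono_on_leD[OF dos_seq_strict_mono_start[OF d]] \<open>valid_idx N l\<close> i by simp
  ultimately have started: "\<not> ereal t < ext_h h N l" using i(3) by (simp add: ext_h_def)
  have "i \<le> Max (attacks_until h N t)" using fin i by (simp add: attacks_until_def)
  then have "Bf_i h i / \<theta> \<le> Max ({\<epsilon>0} \<union> (\<lambda>i. Bf_i h i / \<theta>) ` {l..Max (attacks_until h N t)})"
    using i(2) by (intro Max_ge) auto
  also have "\<dots> = Bf_hat h N l \<epsilon>0 \<theta> t"
    unfolding Bf_hat_def Let_def if_not_P[OF started]
      THE_current_index_eq_Max[OF dos_seq_strict_mono_start[OF d] finS i ext_h_def[of h N]]
    by (simp add: attacks_until_def)
  finally show ?thesis .
qed

lemma Bd_hat_eventually_dur_bound: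
  assumes d: "dos_seq h \<tau> N"
    and \<Gamma>: "0 \<le> \<Gamma>" "\<And>n. valid_idx N n \<Longrightarrow> \<tau> n \<le> \<Gamma>"
    and fin: "\<And>t. finite (attacks_until h N t)"
    and Inf_less: "Inf (dur_bounds h \<tau> N) < 1"
    and "1 \<le> l" and \<epsilon>: "0 \<le> \<epsilon>0" "\<epsilon>0 \<le> 1" and \<theta>: "0 < \<theta>" "\<theta> < 1"
  shows "\<exists>T. \<forall>t\<ge>T. Bd_hat h \<tau> N l \<epsilon>0 \<theta> t \<in> dur_bounds h \<tau> N"
proof -
  define D where "D = dur_bounds h \<tau> N"
  have up: "Bd_hat h \<tau> N l \<epsilon>0 \<theta> t \<in> D" if "y \<in> D" "y \<le> Bd_hat h \<tau> N l \<epsilon>0 \<theta> t" for y t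
  proof -
    have "Bd_hat h \<tau> N l \<epsilon>0 \<theta> t \<le> 1" using \<epsilon>(2) \<theta>(1) by (intro Bd_hat_le_one) auto
    with that show ?thesis unfolding D_def by (rule dur_bounds_upward_closed)
  qed
  consider (exceeds) i where "valid_idx N i" "l \<le> i" "Inf D < \<theta> * Bd_i h \<tau> N i + (1 - \<theta>)"
    | (bounded) "\<And>i. valid_idx N i \<Longrightarrow> l \<le> i \<Longrightarrow> \<theta> * Bd_i h \<tau> N i + (1 - \<theta>) \<le> Inf D"
    using not_less by blast
  then show ?thesis
  proof cases
    case exceeds
    obtain y where y: "y \<in> D" "y < \<theta> * Bd_i h \<tau> N i + (1 - \<theta>)"
      using cInf_lessD[OF _ exceeds(3)] one_mem_dur_bounds unfolding D_def by blast
    have "Bd_hat h \<tau> N l \<epsilon>0 \<theta> t \<in> D" if "h i + \<tau> i \<le> t" for t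
    proof -
      have "\<theta> * Bd_i h \<tau> N i + (1 - \<theta>) \<le> Bd_hat h \<tau> N l \<epsilon>0 \<theta> t"
        by (rule Bd_hat_ge_Bd_i[OF d fin \<open>1 \<le> l\<close> exceeds(1,2) that])
      then show ?thesis using y by (intro up[of y]) auto
    qed
    then show ?thesis unfolding D_def by blast
  next
    case bounded
    define b where "b = (Inf D - 1 + \<theta>) / \<theta>"
    have Bd_le: "Bd_i h \<tau> N i \<le> b" if "valid_idx N i" "l \<le> i" for i
      using bounded[OF that] \<theta>(1) by (simp add: b_def pos_le_divide_eq algebra_simps)
    have "(1 - \<theta>) * (Inf D - 1) < 0" using \<theta>(2) Inf_less unfolding D_def by (intro mult_pos_neg) auto
    then have b_less: "b < Inf D" using \<theta>(1) by (simp add: b_def divide_less_eq algebra_simps)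
    have "max b \<epsilon>0 \<in> D" unfolding D_def
    proof (rule dur_bound_of_Bd_i_bound[OF d \<Gamma> fin])
      show "0 \<le> max b \<epsilon>0" using \<epsilon>(1) by simp
      show "max b \<epsilon>0 \<le> 1" using b_less Inf_dur_bounds_le_one[of h \<tau> N] \<epsilon>(2) unfolding D_def by simp
      show "Bd_i h \<tau> N i \<le> max b \<epsilon>0" if "valid_idx N i" "l \<le> i" for i
        using Bd_le[OF that] by simp
    qed
    moreover have "Inf D \<le> max b \<epsilon>0"
      using \<open>max b \<epsilon>0 \<in> D\<close> bdd_below_dur_bounds unfolding D_def by (rule cInf_lower)
    ultimately have "\<epsilon>0 \<in> D" using b_less by (simp add: max_def split: if_splits)
    then have "Bd_hat h \<tau> N l \<epsilon>0 \<theta> t \<in> D" for t using Bd_hat_ge_eps by (rule up)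
    then show ?thesis unfolding D_def by blast
  qed
qed

lemma Bf_hat_eventually_freq_bound:
  assumes d: "dos_seq h \<tau> N" and ne: "freq_bounds h N \<noteq> {}"
    and "2 \<le> l" and "0 < \<epsilon>0" and \<theta>: "0 < \<theta>" "\<theta> < 1"
  shows "\<exists>T. \<forall>t\<ge>T. Bf_hat h N l \<epsilon>0 \<theta> t \<in> freq_bounds h N"
proof -
  define F where "F = freq_bounds h N"
  have fin: "\<And>t. finite (attacks_until h N t)" using finite_attacks_until[OF d ne] .
  have up: "Bf_hat h N l \<epsilon>0 \<theta> t \<in> F" if "y \<in> F" "y \<le> Bf_hat h N l \<epsilon>0 \<theta> t" for y t
    using that unfolding F_def by (rule freq_bounds_upward_closed)
  consider (exceeds) j where "valid_idx N j" "l \<le> j" "Inf F < Bf_i h j / \<theta>"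
    | (bounded) "\<And>j. valid_idx N j \<Longrightarrow> l \<le> j \<Longrightarrow> Bf_i h j / \<theta> \<le> Inf F"
    using not_less by blast
  then show ?thesis
  proof cases
    case exceeds
    obtain y where y: "y \<in> F" "y < Bf_i h j / \<theta>"
      using cInf_lessD[OF _ exceeds(3)] ne unfolding F_def by blast
    have "Bf_hat h N l \<epsilon>0 \<theta> t \<in> F" if "h j \<le> t" for t
    proof -
      have "Bf_i h j / \<theta> \<le> Bf_hat h N l \<epsilon>0 \<theta> t"
        using \<open>2 \<le> l\<close> by (intro Bf_hat_ge_Bf_i[OF d fin _ exceeds(1,2) that]) simp
      then show ?thesis using y by (intro up[of y]) auto
    qed
    then show ?thesis unfolding F_def by blast
  next
    case bounded
    define c where "c = max (\<theta> * Inf F) \<epsilon>0"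
    have c: "0 < c" using \<open>0 < \<epsilon>0\<close> by (simp add: c_def)
    have "real j \<le> c * h j" if j: "valid_idx N j" "l \<le> j" for j
    proof -
      have h_pos: "0 < h j" using dos_seq_start_pos[OF d j(1)] j(2) \<open>2 \<le> l\<close> by simp
      have "real j / h j \<le> \<theta> * Inf F"
        using bounded[OF j] \<theta>(1) unfolding Bf_i_def[symmetric] by (simp add: pos_divide_le_eq mult.commute)
      also have "\<dots> \<le> c" by (simp add: c_def)
      finally show ?thesis using h_pos by (simp add: pos_divide_le_eq mult.commute)
    qed
    then have "c \<in> F" unfolding F_def by (rule freq_bound_of_start_lower_bound[OF d fin c])
    then have Inf_le: "Inf F \<le> c"
      using bdd_below_freq_bounds unfolding F_def by (rule cInf_lower)
    have "\<theta> * Inf F \<le> \<epsilon>0"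
    proof (rule ccontr)
      assume "\<not> \<theta> * Inf F \<le> \<epsilon>0"
      then have "0 < \<theta> * Inf F" "Inf F \<le> \<theta> * Inf F"
        using Inf_le \<open>0 < \<epsilon>0\<close> by (auto simp: c_def)
      then show False using \<theta> by (simp add: zero_less_mult_iff)
    qed
    then have "\<epsilon>0 \<in> F" using \<open>c \<in> F\<close> by (simp add: c_def)
    then have "Bf_hat h N l \<epsilon>0 \<theta> t \<in> F" for t using Bf_hat_ge_eps by (rule up)
    then show ?thesis unfolding F_def by blast
  qed
qed

theorem theorem1:
  fixes h \<tau> :: "nat \<Rightarrow> real" and N :: enat and l :: nat and \<epsilon>0 \<theta> :: real
  assumes "dos_seq h \<tau> N"
    and "\<not> edge_case h \<tau> N"
    and "2 \<le> l"
    and "0 < \<epsilon>0" and "\<epsilon>0 < 1"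
    and "0 < \<theta>" and "\<theta> < 1"
  shows "\<exists>T\<ge>0. \<forall>t\<ge>T. Bd_hat h \<tau> N l \<epsilon>0 \<theta> t \<in> dur_bounds h \<tau> N
                      \<and> Bf_hat h N l \<epsilon>0 \<theta> t \<in> freq_bounds h N"
proof -
  have "Inf (dur_bounds h \<tau> N) \<noteq> 1" and "Inf (ereal ` freq_bounds h N) \<noteq> \<infinity>"
    and "\<not> (\<forall>\<Gamma>>0. \<exists>n. valid_idx N n \<and> \<tau> n > \<Gamma>)"
    using assms(2) unfolding edge_case_def by auto
  then obtain \<Gamma> where \<Gamma>: "0 < \<Gamma>" "\<And>n. valid_idx N n \<Longrightarrow> \<tau> n \<le> \<Gamma>"
    by (auto simp: not_less)
  have Inf_less: "Inf (dur_bounds h \<tau> N) < 1"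
    using Inf_dur_bounds_le_one \<open>Inf (dur_bounds h \<tau> N) \<noteq> 1\<close> by (rule order_le_neq_trans)
  have ne: "freq_bounds h N \<noteq> {}"
    using \<open>Inf (ereal ` freq_bounds h N) \<noteq> \<infinity>\<close> by (auto simp: top_ereal_def)
  have "\<exists>T. \<forall>t\<ge>T. Bd_hat h \<tau> N l \<epsilon>0 \<theta> t \<in> dur_bounds h \<tau> N"
    by (rule Bd_hat_eventually_dur_bound[OF assms(1) less_imp_le[OF \<Gamma>(1)] \<Gamma>(2)
          finite_attacks_until[OF assms(1) ne] Inf_less]) (use assms(3-7) in auto)
  moreover have "\<exists>T. \<forall>t\<ge>T. Bf_hat h N l \<epsilon>0 \<theta> t \<in> freq_bounds h N"
    by (rule Bf_hat_eventually_freq_bound[OF assms(1) ne assms(3,4,6,7)])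
  ultimately obtain T1 T2
    where "\<forall>t\<ge>T1. Bd_hat h \<tau> N l \<epsilon>0 \<theta> t \<in> dur_bounds h \<tau> N"
      and "\<forall>t\<ge>T2. Bf_hat h N l \<epsilon>0 \<theta> t \<in> freq_bounds h N"
    by blast
  then show ?thesis by (intro exI[of _ "max 0 (max T1 T2)"]) auto
qed

end
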